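(* Consider the HyperLogLogLog update procedure (described in the context) with $m$ registers, processing a stream containing $n$ distinct elements. For sufficiently large $n$ satisfying $n/(\log_2 n)^2>m^2$, with high probability the updates take amortized constant time, i.e., the total work spent on processing the $n$ distinct elements (including all calls to the compression and rebasing routines) is $O(n)$.
   Context: HyperLogLogLog sketch: parameters $m$ (a power of two), word size $w$, and $\kappa$ (bits per dense register). The uncompressed HyperLogLog registers $M'[j]\in[w]$, $j\in[m]$, are represented by a triple $(S,M,B)$: a base value $B$, a dense array $M$ of $\kappa$-bit offsets, and an associative array $S$ of (index, value) pairs; register $j$ has value $S[j]$ if $j\in S$ and $B+M[j]$ otherwise, and register $j$ is stored densely ($M[j]=M'[j]-B$) iff $B\le M'[j]<B+2^\kappa$, otherwise sparsely in $S$. Initially $S=\emptyset$, $M=0$, $B=0$. Update with element $y$: compute $j=f(y)\in[m]$ and $r=\rho(h(y))$ (the 1-based position of the first one-bit of a random $w$-bit hash value); if $r$ exceeds the current value of register $j$, set register $j$ to $r$ (densely or sparsely according to the rule above) and then call compress. Compress: choose $B'$ maximizing the number of registers $j$ with $B'\le M'[j]<B'+2^\kappa$, trying candidate base values and spending $O(m)$ work per candidate; if $B'\ne B$, rebase, i.e., reassign every register to the dense or sparse representation relative to $B'$ in $O(m)$ work, and set $B\gets B'$. Each update that does not trigger compression costs $O(1)$ work. Elements are hashed by random hash functions (register index uniform in $[m]$, $\rho$-values geometric with $\Pr[\rho=k]=2^{-k}$, independent across distinct elements). "With high probability" means with probability at least $1-\beta$ for a fixed constant $\beta\in(0,1)$.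 *)

theory Defs
  imports "HOL-Probability.Probability"
begin

text \<open>State (S, M, B) of a HyperLogLogLog sketch. S is the sparse associative array
  (index to value), M the dense array of offsets, B the base value.\<close>
record hlll_state =
  hS :: "nat \<Rightarrow> nat option"
  hM :: "nat \<Rightarrow> nat"
  hB :: nat

definition hlll_init :: hlll_state where
  "hlll_init = \<lparr>hS = (\<lambda>_. None), hM = (\<lambda>_. 0), hB = 0\<rparr>"

definition reg_val :: "hlll_state \<Rightarrow> nat \<Rightarrow> nat" where
  "reg_val s j = (case hS s j of Some v \<Rightarrow> v | None \<Rightarrow> hB s + hM s j)"

definition in_window :: "nat \<Rightarrow> nat \<Rightarrow> nat \<Rightarrow> bool" where
  "in_window \<kappa> b v \<longleftrightarrow> b \<le> v \<and> v < b + 2 ^ \<kappa>"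

definition set_reg :: "nat \<Rightarrow> hlll_state \<Rightarrow> nat \<Rightarrow> nat \<Rightarrow> hlll_state" where
  "set_reg \<kappa> s j v =
     (if in_window \<kappa> (hB s) v
      then s\<lparr>hS := (hS s)(j := None), hM := (hM s)(j := v - hB s)\<rparr>
      else s\<lparr>hS := (hS s)(j := Some v)\<rparr>)"

definition rebase :: "nat \<Rightarrow> nat \<Rightarrow> hlll_state \<Rightarrow> nat \<Rightarrow> hlll_state" where
  "rebase m \<kappa> s b' =
     \<lparr>hS = (\<lambda>j. if j < m \<and> \<not> in_window \<kappa> b' (reg_val s j) then Some (reg_val s j) else None),
      hM = (\<lambda>j. if j < m \<and> in_window \<kappa> b' (reg_val s j) then reg_val s j - b' else 0),
      hB = b'\<rparr>"

definition dense_count :: "nat \<Rightarrow> nat \<Rightarrow> hlll_state \<Rightarrow> nat \<Rightarrow> nat" where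
  "dense_count m \<kappa> s b = card {j \<in> {..<m}. in_window \<kappa> b (reg_val s j)}"

text \<open>Candidate base values tried by compress: 0, 1, ..., max register value
  (every optimal window is attained by one of them).\<close>
definition candidates :: "nat \<Rightarrow> hlll_state \<Rightarrow> nat set" where
  "candidates m s = {0 .. Max (reg_val s ` {..<m})}"

definition opt_base :: "nat \<Rightarrow> nat \<Rightarrow> hlll_state \<Rightarrow> nat" where
  "opt_base m \<kappa> s =
     (if \<forall>b \<in> candidates m s. dense_count m \<kappa> s b \<le> dense_count m \<kappa> s (hB s) then hB s
      else (LEAST b. b \<in> candidates m s \<and>
                 (\<forall>b' \<in> candidates m s. dense_count m \<kappa> s b' \<le> dense_count m \<kappa> s b)))"

text \<open>Compress: returns new state and work spent (m per candidate tried, plus m for a rebase).\<close>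
definition compress :: "nat \<Rightarrow> nat \<Rightarrow> hlll_state \<Rightarrow> hlll_state \<times> nat" where
  "compress m \<kappa> s =
     (let b' = opt_base m \<kappa> s
      in (if b' = hB s then s else rebase m \<kappa> s b',
          m * card (candidates m s) + (if b' = hB s then 0 else m)))"

text \<open>Update with an element whose hash gives register index j and rho-value r;
  returns new state and work spent (1 unit of constant work, plus compression work).\<close>
definition hlll_update :: "nat \<Rightarrow> nat \<Rightarrow> hlll_state \<Rightarrow> nat \<times> nat \<Rightarrow> hlll_state \<times> nat" where
  "hlll_update m \<kappa> s y =
     (case y of (j, r) \<Rightarrow>
        if reg_val s j < r
        then (case compress m \<kappa> (set_reg \<kappa> s j r) of (s', c) \<Rightarrow> (s', 1 + c))
        else (s, 1))"

text \<open>Random hash of a fresh distinct element: register index uniform in [m],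
  rho geometric with Pr[rho = k] = 2^(-k), k >= 1, independent.\<close>
definition hash_pmf :: "nat \<Rightarrow> (nat \<times> nat) pmf" where
  "hash_pmf m = pair_pmf (pmf_of_set {..<m}) (map_pmf Suc (geometric_pmf (1/2)))"

primrec hlll_run :: "nat \<Rightarrow> nat \<Rightarrow> nat \<Rightarrow> (hlll_state \<times> nat) pmf" where
  "hlll_run m \<kappa> 0 = return_pmf (hlll_init, 0)"
| "hlll_run m \<kappa> (Suc n) =
     bind_pmf (hlll_run m \<kappa> n)
       (\<lambda>(s, c). map_pmf (\<lambda>y. case hlll_update m \<kappa> s y of (s', c') \<Rightarrow> (s', c + c')) (hash_pmf m))"

end

theory Submission imports Defs begin

text \<open>Compression and rebasing never change a register value, and the work of one compression
  is at most \<open>m (L + 2)\<close> as long as all registers are at most \<open>L\<close>. Every update that triggers a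
  compression strictly increases the register sum, which is at most \<open>m L\<close>; so while all
  \<open>\<rho>\<close>-values are at most \<open>L\<close> the total work is at most \<open>n + m\<^sup>2 L (L + 2)\<close>. By the union bound
  all \<open>n\<close> values of \<open>\<rho>\<close> are at most \<open>L\<close> with probability at least \<open>1 - n 2\<^sup>-\<^sup>L\<close>, and the choice
  \<open>L \<approx> log\<^sub>2 (n / \<beta>) \<le> 2 log\<^sub>2 n - 2\<close> turns the bound into \<open>n + 4 m\<^sup>2 (log\<^sub>2 n)\<^sup>2 \<le> 5 n\<close>.\<close>

lemma reg_val_set_reg: "reg_val (set_reg \<kappa> s j r) i = (if i = j then r else reg_val s i)"
  by (auto simp: set_reg_def reg_val_def in_window_def split: option.splits)

lemma reg_val_rebase: "i < m \<Longrightarrow> reg_val (rebase m \<kappa> s b) i = reg_val s i"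
  by (auto simp: rebase_def reg_val_def in_window_def split: option.splits)

lemma reg_val_compress: "i < m \<Longrightarrow> reg_val (fst (compress m \<kappa> s)) i = reg_val s i"
  by (simp add: compress_def Let_def reg_val_rebase)

lemma card_candidates_le:
  assumes "m > 0" and "\<forall>i<m. reg_val s i \<le> L"
  shows "card (candidates m s) \<le> L + 1"
proof -
  have "Max (reg_val s ` {..<m}) \<le> L" using assms by (subst Max_le_iff) auto
  then show ?thesis by (simp add: candidates_def)
qed

lemma compress_work_le:
  assumes "m > 0" and "\<forall>i<m. reg_val s i \<le> L"
  shows "snd (compress m \<kappa> s) \<le> m * (L + 2)"
proof -
  have "m * card (candidates m s) \<le> m * (L + 1)"
    using card_candidates_le[OF assms] by (rule mult_left_mono) simp
  then show ?thesis by (simp add: compress_def Let_def algebra_simps)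
qed

definition reg_sum :: "nat \<Rightarrow> hlll_state \<Rightarrow> nat" where
  "reg_sum m s = (\<Sum>i<m. reg_val s i)"

definition amortized_invariant :: "nat \<Rightarrow> nat \<Rightarrow> nat \<Rightarrow> hlll_state \<times> nat \<Rightarrow> bool" where
  "amortized_invariant m L t x \<longleftrightarrow>
     (\<forall>i<m. reg_val (fst x) i \<le> L) \<and> snd x \<le> t + m * (L + 2) * reg_sum m (fst x)"

lemma amortized_invariant_init: "amortized_invariant m L 0 (hlll_init, 0)"
  by (simp add: amortized_invariant_def reg_sum_def hlll_init_def reg_val_def)

lemma amortized_invariant_update:
  assumes "m > 0" and inv: "amortized_invariant m L t (s, c)" and "j < m" and "r \<le> L"
  shows "amortized_invariant m L (Suc t)
           (case hlll_update m \<kappa> s (j, r) of (s', c') \<Rightarrow> (s', c + c'))"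
proof (cases "reg_val s j < r")
  case False
  then show ?thesis using inv by (simp add: hlll_update_def amortized_invariant_def)
next
  case True
  define s1 where "s1 = set_reg \<kappa> s j r"
  obtain s' w where compress_s1: "compress m \<kappa> s1 = (s', w)" by fastforce
  have s1_bounded: "\<forall>i<m. reg_val s1 i \<le> L"
    using assms by (auto simp: s1_def reg_val_set_reg amortized_invariant_def)
  have s'_eq: "\<forall>i<m. reg_val s' i = reg_val s1 i"
    using reg_val_compress[of _ m \<kappa> s1] compress_s1 by simp
  have w: "w \<le> m * (L + 2)"
    using compress_work_le[OF assms(1) s1_bounded, of \<kappa>] compress_s1 by simp
  have "reg_sum m s < reg_sum m s1" unfolding reg_sum_def
    by (rule sum_strict_mono_ex1) (use True \<open>j < m\<close> in \<open>auto simp: s1_def reg_val_set_reg\<close>)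
  then have sum_increases: "reg_sum m s + 1 \<le> reg_sum m s'"
    using s'_eq by (simp add: reg_sum_def)
  have "c + (1 + w) \<le> Suc t + m * (L + 2) * (reg_sum m s + 1)"
    using inv w by (simp add: amortized_invariant_def algebra_simps)
  also have "\<dots> \<le> Suc t + m * (L + 2) * reg_sum m s'"
    using sum_increases by (intro add_left_mono mult_left_mono) auto
  finally show ?thesis
    using True compress_s1 s1_bounded s'_eq
    by (simp add: hlll_update_def amortized_invariant_def s1_def)
qed

lemma work_le_of_amortized_invariant:
  assumes "amortized_invariant m L t x"
  shows "snd x \<le> t + m\<^sup>2 * (L * (L + 2))"
proof -
  have "reg_sum m (fst x) \<le> m * L"
    using assms sum_bounded_above[of "{..<m}" "reg_val (fst x)" L]
    by (auto simp: amortized_invariant_def reg_sum_def)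
  then have "m * (L + 2) * reg_sum m (fst x) \<le> m * (L + 2) * (m * L)"
    by (rule mult_left_mono) simp
  then show ?thesis
    using assms by (simp add: amortized_invariant_def power2_eq_square algebra_simps)
qed

lemma measure_bind_pmf:
  "measure_pmf.prob (bind_pmf p f) A = (\<integral>x. measure_pmf.prob (f x) A \<partial>measure_pmf p)"
  unfolding measure_pmf_bind
  by (rule measure_pmf.measure_bind[where N="count_space UNIV"])
     (auto intro!: measurable_pmf_measure2 simp: measure_pmf_in_subprob_space)

lemma measure_bind_pmf_ge:
  fixes \<delta> :: real
  assumes "\<And>x. x \<in> A \<Longrightarrow> measure_pmf.prob (f x) B \<ge> 1 - \<delta>" and "0 \<le> \<delta>"
  shows "measure_pmf.prob (bind_pmf p f) B \<ge> measure_pmf.prob p A - \<delta>"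
proof -
  have pointwise: "indicator A x - \<delta> \<le> measure_pmf.prob (f x) B" for x
    using assms by (cases "x \<in> A") (auto intro: order.trans[of _ 0])
  have "measure_pmf.prob p A - \<delta> = (\<integral>x. indicator A x - \<delta> \<partial>measure_pmf p)"
    by (subst Bochner_Integration.integral_diff)
       (auto simp: measure_pmf.prob_space intro!: measure_pmf.integrable_const_bound[where B=1])
  also have "\<dots> \<le> (\<integral>x. measure_pmf.prob (f x) B \<partial>measure_pmf p)"
  proof (rule integral_mono[OF _ _ pointwise])
    show "integrable (measure_pmf p) (\<lambda>x. indicator A x - \<delta>)"
      by (intro Bochner_Integration.integrable_diff measure_pmf.integrable_const
          measure_pmf.integrable_const_bound[where B=1]) auto
  qed (auto intro!: measure_pmf.integrable_const_bound[where B=1])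
  finally show ?thesis by (simp add: measure_bind_pmf)
qed

lemma measure_geometric_pmf_lessThan:
  assumes "0 < p" and "p \<le> 1"
  shows "measure_pmf.prob (geometric_pmf p) {..<L} = 1 - (1 - p) ^ L"
  using assms by (simp add: measure_measure_pmf_finite one_diff_power_eq sum_distrib_left mult.commute)

lemma measure_hash_pmf_rho_le: "measure_pmf.prob (hash_pmf m) {y. snd y \<le> L} = 1 - (1/2) ^ L"
proof -
  have "measure_pmf.prob (hash_pmf m) {y. snd y \<le> L}
      = measure_pmf.prob (map_pmf snd (hash_pmf m)) {r. r \<le> L}"
    by simp
  also have "map_pmf snd (hash_pmf m) = map_pmf Suc (geometric_pmf (1/2))"
    unfolding hash_pmf_def by (rule map_snd_pair_pmf)
  also have "measure_pmf.prob \<dots> {r. r \<le> L} = measure_pmf.prob (geometric_pmf (1/2)) {..<L}"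
    by (simp add: Suc_le_eq lessThan_def)
  finally show ?thesis by (simp add: measure_geometric_pmf_lessThan)
qed

lemma fst_in_set_hash_pmf: "m > 0 \<Longrightarrow> y \<in> set_pmf (hash_pmf m) \<Longrightarrow> fst y < m"
  by (auto simp: hash_pmf_def set_pmf_of_set lessThan_empty_iff)

lemma hlll_run_amortized_invariant:
  assumes "m > 0"
  shows "measure_pmf.prob (hlll_run m \<kappa> n) {x. amortized_invariant m L n x} \<ge> 1 - real n * (1/2) ^ L"
proof (induction n)
  case 0
  then show ?case by (simp add: amortized_invariant_init)
next
  case (Suc n)
  let ?step = "\<lambda>(s, c). map_pmf (\<lambda>y. case hlll_update m \<kappa> s y of (s', c') \<Rightarrow> (s', c + c')) (hash_pmf m)"
  have "measure_pmf.prob (?step x) {x. amortized_invariant m L (Suc n) x} \<ge> 1 - (1/2) ^ L"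
    if "x \<in> {x. amortized_invariant m L n x}" for x
  proof -
    obtain s c where x: "x = (s, c)" by fastforce
    have "AE y in hash_pmf m. y \<in> {y. snd y \<le> L} \<longrightarrow>
            amortized_invariant m L (Suc n) (case hlll_update m \<kappa> s y of (s', c') \<Rightarrow> (s', c + c'))"
    proof (intro AE_pmfI impI)
      fix y assume "y \<in> set_pmf (hash_pmf m)" and "y \<in> {y. snd y \<le> L}"
      moreover obtain j r where "y = (j, r)" by fastforce
      ultimately show "amortized_invariant m L (Suc n) (case hlll_update m \<kappa> s y of (s', c') \<Rightarrow> (s', c + c'))"
        using that x fst_in_set_hash_pmf[OF assms] amortized_invariant_update[OF assms] by auto
    qed
    then have "measure_pmf.prob (hash_pmf m) {y. snd y \<le> L} \<le> measure_pmf.prob (?step x) {x. amortized_invariant m L (Suc n) x}"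
      by (auto simp: x intro!: measure_pmf.finite_measure_mono_AE)
    then show ?thesis by (simp add: measure_hash_pmf_rho_le)
  qed
  then have "measure_pmf.prob (hlll_run m \<kappa> (Suc n)) {x. amortized_invariant m L (Suc n) x}
      \<ge> measure_pmf.prob (hlll_run m \<kappa> n) {x. amortized_invariant m L n x} - (1/2) ^ L"
    by (simp only: hlll_run.simps) (rule measure_bind_pmf_ge, auto)
  then show ?case using Suc.IH by (simp add: algebra_simps)
qed

lemma rho_cutoff_exists:
  fixes \<beta> :: real
  assumes "0 < \<beta>" and "\<beta> \<le> 1" and "8 / \<beta> \<le> real n"
  shows "\<exists>L. real n * (1/2) ^ L \<le> \<beta> \<and> real L + 2 \<le> 2 * log 2 (real n)"
proof -
  define L where "L = nat \<lceil>log 2 (real n / \<beta>)\<rceil>"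
  have "8 \<le> 8 / \<beta>" using assms by (simp add: field_simps)
  then have n8: "8 \<le> real n" using assms by linarith
  then have "1 < real n / \<beta>" using assms by (simp add: field_simps)
  then have log_pos: "0 < log 2 (real n / \<beta>)" by simp
  have "real n / \<beta> = 2 powr log 2 (real n / \<beta>)" using n8 assms by simp
  also have "\<dots> \<le> 2 powr real L" unfolding L_def by (intro powr_mono) linarith+
  finally have "real n / \<beta> \<le> 2 ^ L" by (simp add: powr_realpow)
  then have "real n * (1/2) ^ L \<le> \<beta>" using assms by (simp add: field_simps power_divide)
  have "log 2 (real n / \<beta>) + 3 = log 2 (8 / \<beta>) + log 2 (real n)"
    using assms n8 log_pow_cancel[of 2 3] by (simp add: log_divide log_mult)
  also have "log 2 (8 / \<beta>) \<le> log 2 (real n)" using assms by (intro log_mono) auto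
  finally have "real L + 2 \<le> 2 * log 2 (real n)" unfolding L_def using log_pos by linarith
  with \<open>real n * (1/2) ^ L \<le> \<beta>\<close> show ?thesis by blast
qed

lemma amortized_invariant_work_le_linear:
  assumes inv: "amortized_invariant m L n x"
    and L: "real L + 2 \<le> 2 * log 2 (real n)"
    and m_small: "real n / (log 2 (real n))\<^sup>2 > (real m)\<^sup>2"
  shows "real (snd x) \<le> 5 * real n"
proof -
  have "0 < log 2 (real n)" using L by linarith
  have "real L * (real L + 2) \<le> (2 * log 2 (real n)) * (2 * log 2 (real n))"
    using L by (intro mult_mono) auto
  then have "(real m)\<^sup>2 * (real L * (real L + 2)) \<le> (real m)\<^sup>2 * (4 * (log 2 (real n))\<^sup>2)"
    by (intro mult_left_mono) (auto simp: power2_eq_square)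
  also have "\<dots> \<le> 4 * real n"
    using m_small \<open>0 < log 2 (real n)\<close> by (simp add: field_simps)
  finally have "real (m\<^sup>2 * (L * (L + 2))) \<le> 4 * real n" by (simp add: algebra_simps)
  moreover have "real (snd x) \<le> real n + real (m\<^sup>2 * (L * (L + 2)))"
    using work_le_of_amortized_invariant[OF inv] by linarith
  ultimately show ?thesis by simp
qed

theorem lemma3p7:
  fixes \<beta> :: real
  assumes "0 < \<beta>" and "\<beta> < 1"
  shows "\<exists>C N0. \<forall>m \<kappa> n. (\<exists>k. m = 2 ^ k) \<longrightarrow> n \<ge> N0 \<longrightarrow>
           real n / (log 2 (real n))^2 > (real m)^2 \<longrightarrow>
           measure_pmf.prob (hlll_run m \<kappa> n) {x. real (snd x) \<le> C * real n} \<ge> 1 - \<beta>"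
proof (intro exI[of _ "5 :: real"] exI[of _ "nat \<lceil>8 / \<beta>\<rceil>"] allI impI)
  fix m \<kappa> n :: nat
  assume "\<exists>k. m = 2 ^ k" and "nat \<lceil>8 / \<beta>\<rceil> \<le> n"
     and m_small: "real n / (log 2 (real n))^2 > (real m)^2"
  then have "m > 0" and "8 / \<beta> \<le> real n" by auto
  then obtain L where fail_prob: "real n * (1/2) ^ L \<le> \<beta>" and L: "real L + 2 \<le> 2 * log 2 (real n)"
    using rho_cutoff_exists[of \<beta> n] assms by auto
  have "{x. amortized_invariant m L n x} \<subseteq> {x. real (snd x) \<le> 5 * real n}"
    using amortized_invariant_work_le_linear[OF _ L m_small] by blast
  then have "measure_pmf.prob (hlll_run m \<kappa> n) {x. amortized_invariant m L n x}
      \<le> measure_pmf.prob (hlll_run m \<kappa> n) {x. real (snd x) \<le> 5 * real n}"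
    by (intro measure_pmf.finite_measure_mono) auto
  then show "measure_pmf.prob (hlll_run m \<kappa> n) {x. real (snd x) \<le> 5 * real n} \<ge> 1 - \<beta>"
    using hlll_run_amortized_invariant[OF \<open>m > 0\<close>, where \<kappa> = \<kappa> and L = L and n = n] fail_prob by linarith
qed

end
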